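(* Let $\Lambda$ be a positive $(p-1)$-sphere in $\partial_\infty\mathbf H^{p,q}$ and let $V\subset E$ be a maximal totally isotropic subspace for $\mathbf b$. If $p\geq q+1$, then $\mathbf P(V)\cap\Lambda\neq\emptyset$.
   Context: $E$ is a real vector space of dimension $p+q+1$ ($p\ge2$, $q\ge1$) with a non-degenerate symmetric bilinear form $\mathbf b$ of signature $(p,q+1)$; $\partial_\infty\mathbf H^{p,q}$ is the space of isotropic lines in $E$, viewed as a subset of $\mathbf P(E)$. A maximal totally isotropic subspace is a subspace on which $\mathbf b$ vanishes identically and of maximal dimension $\min\{p,q+1\}$. A triple of distinct isotropic lines $x,y,z$ is positive if $x\oplus y\oplus z$ is $3$-dimensional of signature $(2,1)$; a positive $(p-1)$-sphere is a subset of $\partial_\infty\mathbf H^{p,q}$ homeomorphic to $\mathbf S^{p-1}$ all of whose triples of distinct points are positive. *)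

theory Defs
  imports "HOL-Analysis.Analysis"
begin

text \<open>Points of the projective space P(E): lines of E = real^'n, represented as
  the one-dimensional linear subspaces span {v}, v nonzero.\<close>

definition line_of :: "'a::real_vector \<Rightarrow> 'a set" where
  "line_of v = span {v}"

definition proj_space :: "'a::real_vector set set" where
  "proj_space = {line_of v | v. v \<noteq> 0}"

text \<open>Topology of P(E): quotient topology of E minus 0 under v \<mapsto> line through v.\<close>

definition proj_topology :: "('a::real_normed_vector) set topology" where
  "proj_topology = topology (\<lambda>U. U \<subseteq> proj_space \<and>
      openin (subtopology euclidean (- {0})) {v. v \<noteq> 0 \<and> line_of v \<in> U})"

definition proj_of :: "'a::real_vector set \<Rightarrow> 'a set set" where
  "proj_of W = {line_of v | v. v \<noteq> 0 \<and> v \<in> W}"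

definition pos_index :: "('a::euclidean_space \<Rightarrow> 'a \<Rightarrow> real) \<Rightarrow> 'a set \<Rightarrow> nat" where
  "pos_index b W = Max {dim U | U. subspace U \<and> U \<subseteq> W \<and> (\<forall>u\<in>U. u \<noteq> 0 \<longrightarrow> b u u > 0)}"

definition neg_index :: "('a::euclidean_space \<Rightarrow> 'a \<Rightarrow> real) \<Rightarrow> 'a set \<Rightarrow> nat" where
  "neg_index b W = Max {dim U | U. subspace U \<and> U \<subseteq> W \<and> (\<forall>u\<in>U. u \<noteq> 0 \<longrightarrow> b u u < 0)}"

definition has_signature :: "('a::euclidean_space \<Rightarrow> 'a \<Rightarrow> real) \<Rightarrow> 'a set \<Rightarrow> nat \<Rightarrow> nat \<Rightarrow> bool" where
  "has_signature b W r s \<longleftrightarrow> dim W = r + s \<and> pos_index b W = r \<and> neg_index b W = s"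

text \<open>Boundary of H^{p,q}: isotropic lines.\<close>

definition isotropic_lines :: "('a::euclidean_space \<Rightarrow> 'a \<Rightarrow> real) \<Rightarrow> 'a set set" where
  "isotropic_lines b = {line_of v | v. v \<noteq> 0 \<and> b v v = 0}"

definition positive_triple :: "('a::euclidean_space \<Rightarrow> 'a \<Rightarrow> real) \<Rightarrow> 'a set \<Rightarrow> 'a set \<Rightarrow> 'a set \<Rightarrow> bool" where
  "positive_triple b x y z \<longleftrightarrow>
     x \<in> isotropic_lines b \<and> y \<in> isotropic_lines b \<and> z \<in> isotropic_lines b \<and>
     x \<noteq> y \<and> y \<noteq> z \<and> x \<noteq> z \<and>
     dim (x + y + z) = 3 \<and> has_signature b (x + y + z) 2 1"

text \<open>Positive (p-1)-sphere: subset of the isotropic lines homeomorphic to S^{p-1}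
  (nsphere (p-1), the unit sphere in R^p) all of whose triples of distinct points are positive.\<close>

definition positive_sphere :: "('a::euclidean_space \<Rightarrow> 'a \<Rightarrow> real) \<Rightarrow> nat \<Rightarrow> 'a set set \<Rightarrow> bool" where
  "positive_sphere b p \<Lambda> \<longleftrightarrow>
     \<Lambda> \<subseteq> isotropic_lines b \<and>
     subtopology proj_topology \<Lambda> homeomorphic_space nsphere (p - 1) \<and>
     (\<forall>x\<in>\<Lambda>. \<forall>y\<in>\<Lambda>. \<forall>z\<in>\<Lambda>. x \<noteq> y \<and> y \<noteq> z \<and> x \<noteq> z \<longrightarrow> positive_triple b x y z)"

definition maximal_totally_isotropic :: "('a::euclidean_space \<Rightarrow> 'a \<Rightarrow> real) \<Rightarrow> nat \<Rightarrow> nat \<Rightarrow> 'a set \<Rightarrow> bool" where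
  "maximal_totally_isotropic b p q V \<longleftrightarrow>
     subspace V \<and> (\<forall>x\<in>V. \<forall>y\<in>V. b x y = 0) \<and> dim V = min p (q + 1)"

end

theory Submission
  imports Defs "HOL-Homology.Invariance_of_Domain"
begin

(* Split E = P + N b-orthogonally, with P positive definite of dimension p and N negative
   definite of dimension q + 1. As p >= q + 1, V has dimension q + 1 and meets P trivially, so it
   is the graph of a linear map N -> P: the vector of V with the same N-component as u has a
   P-component "partner u" with b (partner u) (partner v) = - b (projN u) (projN v).

   Positivity of triples makes distinct points of Lambda pair nontrivially, and lets one lift
   Lambda, parametrised by t in S^(p-1), continuously to isotropic vectors s t with
   b (s t) (s t') < 0 for t ~= t' and b-unit P-components. Then X = projP o s and Y = partner o s map S^(p-1) to the b-unit sphere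
   of P with b (X t) (X t') < b (Y t) (Y t') for t ~= t'. So X is injective, hence onto by
   invariance of domain, and Y takes no antipodal values, so Y o X^-1 misses a point and has a
   fixed point by Brouwer. At a coincidence X t = Y t the lift s t lies in V. *)

section \<open>Unit spheres of linear subspaces\<close>

lemma rel_frontier_cball_Int_subspace:
  fixes S :: "'a::euclidean_space set"
  assumes "subspace S"
  shows "rel_frontier (cball 0 1 \<inter> S) = sphere 0 1 \<inter> S"
proof -
  have "(0::'a) \<in> interior (cball 0 1) \<inter> S"
    using assms by (simp add: subspace_0)
  then have "interior (cball (0::'a) 1) \<inter> S \<noteq> {}" by blast
  then have "rel_frontier (cball 0 1 \<inter> S) = frontier (cball 0 1) \<inter> S"
    by (intro convex_affine_rel_frontier_Int) (use assms subspace_imp_affine in auto)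
  then show ?thesis by simp
qed

lemma aff_dim_cball_Int_subspace:
  fixes S :: "'a::euclidean_space set"
  assumes "subspace S"
  shows "aff_dim (cball 0 1 \<inter> S) = int (dim S)"
proof -
  have "(0::'a) \<in> interior (cball 0 1) \<inter> S"
    using assms by (simp add: subspace_0)
  then have "interior (cball (0::'a) 1) \<inter> S \<noteq> {}" by blast
  then have "aff_dim (S \<inter> cball 0 1) = aff_dim S"
    by (intro aff_dim_convex_Int_nonempty_interior) (use assms subspace_imp_convex in auto)
  then show ?thesis by (simp add: Int_commute aff_dim_subspace assms)
qed

lemma punctured_sphere_Int_subspace_homeomorphic_affine:
  fixes P :: "'a::euclidean_space set"
  assumes P: "subspace P"
  obtains T :: "'a set" where "affine T" "aff_dim T = int (dim P) - 1"
    and "\<And>c. c \<in> sphere 0 1 \<inter> P \<Longrightarrow> sphere 0 1 \<inter> P - {c} homeomorphic T"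
proof -
  obtain T :: "'a set" where T: "affine T" "aff_dim T = int (dim P) - 1"
  proof (rule choose_affine_subset [OF affine_UNIV])
    show "int (dim P) - 1 \<le> aff_dim (UNIV :: 'a set)"
      using dim_subset_UNIV[of P] by (simp add: aff_dim_UNIV)
  qed auto
  have "sphere 0 1 \<inter> P - {c} homeomorphic T" if "c \<in> sphere 0 1 \<inter> P" for c
    using homeomorphic_punctured_sphere_affine_gen [of "cball 0 1 \<inter> P" c T] that T P
    by (simp add: rel_frontier_cball_Int_subspace aff_dim_cball_Int_subspace
        convex_Int subspace_imp_convex bounded_Int)
  with T that show ?thesis by blast
qed

lemma sphere_Int_subspace_three_points:
  fixes S :: "'a::euclidean_space set"
  assumes S: "subspace S" and dim: "dim S \<ge> 2"
  obtains t0 t1 t2 where "t0 \<in> sphere 0 1 \<inter> S" "t1 \<in> sphere 0 1 \<inter> S" "t2 \<in> sphere 0 1 \<inter> S"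
    and "t0 \<noteq> t1" "t1 \<noteq> t2" "t0 \<noteq> t2"
proof -
  obtain B where B: "B \<subseteq> S" "pairwise orthogonal B" "\<And>x. x \<in> B \<Longrightarrow> norm x = 1" "card B = dim S"
    using orthonormal_basis_subspace[OF S] by metis
  have "finite B" using B(4) dim by (metis card.infinite not_numeral_le_zero)
  then obtain B2 where "B2 \<subseteq> B" "card B2 = 2"
    using B(4) dim by (metis obtain_subset_with_card_n)
  then obtain e1 e2 where e: "e1 \<in> B" "e2 \<in> B" "e1 \<noteq> e2"
    by (auto simp: card_2_iff)
  have "e1 \<bullet> e1 = 1" "e1 \<bullet> e2 = 0"
    using B(2,3) e by (auto simp: pairwise_def orthogonal_def norm_eq_1)
  then have "e1 \<noteq> - e1" "- e1 \<noteq> e2"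
    by (metis inner_minus_right one_neq_neg_one, metis inner_minus_right neg_0_equal_iff_equal zero_neq_one)
  moreover have "e1 \<in> S" "e2 \<in> S" "norm e1 = 1" "norm e2 = 1" using B e by auto
  ultimately show ?thesis
    using that[of e1 "- e1" e2] e(3) S by (auto simp: subspace_neg)
qed

lemma homeomorphic_nsphere_parametrization:
  fixes X :: "'b topology"
  assumes X: "X homeomorphic_space nsphere (p - 1)" and p: "0 < p" "p \<le> DIM('a)"
  obtains S :: "'a::euclidean_space set" and \<phi> where "subspace S" "dim S = p"
    and "continuous_map (top_of_set (sphere 0 1 \<inter> S)) X \<phi>" "inj_on \<phi> (sphere 0 1 \<inter> S)"
proof -
  obtain B :: "'a set" where B: "B \<subseteq> Basis" "card B = p"
    using p(2) by (metis obtain_subset_with_card_n)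
  have indB: "independent B" using B(1) independent_Basis independent_mono by blast
  have orthB: "pairwise orthogonal B" using pairwise_subset[OF orthogonal_Basis B(1)] .
  obtain f :: "(nat \<Rightarrow> real) \<Rightarrow> 'a" and g
    where "homeomorphic_maps (nsphere (p - 1)) (top_of_set (sphere 0 1 \<inter> span B)) f g"
    by (rule homeomorphic_maps_nsphere_euclidean_sphere[OF indB orthB B(2)])
       (use p(1) B(1) norm_Basis in auto)
  then have "X homeomorphic_space top_of_set (sphere 0 1 \<inter> span B)"
    using homeomorphic_space_trans[OF X] homeomorphic_space_def by blast
  then obtain \<phi> \<psi> where "homeomorphic_maps (top_of_set (sphere 0 1 \<inter> span B)) X \<phi> \<psi>"
    by (metis homeomorphic_maps_sym homeomorphic_space_def)
  then have "continuous_map (top_of_set (sphere 0 1 \<inter> span B)) X \<phi>"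
    and "inj_on \<phi> (sphere 0 1 \<inter> span B)"
    by (auto simp: homeomorphic_maps_def intro: inj_on_inverseI)
  moreover have "dim (span B) = p" using B(2) indB by (simp add: dim_eq_card_independent)
  ultimately show ?thesis using that subspace_span by blast
qed

lemma inj_sphere_map_onto:
  fixes X :: "'a::euclidean_space \<Rightarrow> 'b::euclidean_space"
  assumes S: "subspace S" and P: "subspace P" and dim: "dim S = dim P" "dim P \<ge> 2"
    and contX: "continuous_on (sphere 0 1 \<inter> S) X"
    and injX: "inj_on X (sphere 0 1 \<inter> S)"
    and Xim: "X ` (sphere 0 1 \<inter> S) \<subseteq> sphere 0 1 \<inter> P"
  shows "X ` (sphere 0 1 \<inter> S) = sphere 0 1 \<inter> P"
proof (rule ccontr)
  let ?D = "sphere 0 1 \<inter> S"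
  assume "X ` ?D \<noteq> sphere 0 1 \<inter> P"
  with Xim obtain c where c: "c \<in> sphere 0 1 \<inter> P" "c \<notin> X ` ?D" by blast
  obtain T :: "'b set" where T: "affine T" "aff_dim T = int (dim P) - 1"
    and punct: "\<And>c. c \<in> sphere 0 1 \<inter> P \<Longrightarrow> sphere 0 1 \<inter> P - {c} homeomorphic T"
    using punctured_sphere_Int_subspace_homeomorphic_affine [OF P] by blast
  obtain j k where jk: "homeomorphism (sphere 0 1 \<inter> P - {c}) T j k"
    using punct [OF c(1)] homeomorphic_def by blast
  have j: "continuous_on (sphere 0 1 \<inter> P - {c}) j"
    "inj_on j (sphere 0 1 \<inter> P - {c})" "j ` (sphere 0 1 \<inter> P - {c}) = T"
    using homeomorphism_cont1 [OF jk] homeomorphism_image1 [OF jk]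
    by (auto intro: inj_on_inverseI [where g = k] homeomorphism_apply1 [OF jk])
  have XD: "X ` ?D \<subseteq> sphere 0 1 \<inter> P - {c}" using Xim c by auto
  have cont: "continuous_on ?D (j \<circ> X)"
    using continuous_on_compose[OF contX continuous_on_subset[OF j(1) XD]] .
  have inj: "inj_on (j \<circ> X) ?D"
    using comp_inj_on[OF injX inj_on_subset[OF j(2) XD]] .
  have im: "(j \<circ> X) ` ?D \<subseteq> T" using j(3) XD by auto
  \<comment> \<open>by invariance of domain the image is open in \<open>T\<close>; being compact, it is also closed\<close>
  have "openin (top_of_set T) ((j \<circ> X) ` ?D)"
    by (rule invariance_of_domain_sphere_affine_set_gen [OF cont inj im, of "cball 0 1 \<inter> S"])
       (use S T dim in \<open>simp_all add: convex_Int subspace_imp_convex bounded_Int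
          aff_dim_cball_Int_subspace rel_frontier_cball_Int_subspace\<close>)
  moreover have cpt: "compact ((j \<circ> X) ` ?D)"
    using compact_continuous_image[OF cont] S by (simp add: closed_subspace compact_Int_closed)
  then have "closedin (top_of_set T) ((j \<circ> X) ` ?D)"
    using im by (simp add: closed_subset compact_imp_closed)
  moreover have "?D \<noteq> {}"
    using sphere_Int_subspace_three_points [OF S] dim by (metis empty_iff)
  ultimately have "(j \<circ> X) ` ?D = T"
    using connected_clopen[THEN iffD1, OF convex_connected[OF affine_imp_convex[OF T(1)]]] by blast
  then have "bounded T" using cpt compact_imp_bounded by metis
  then have "aff_dim T \<le> 0" using affine_bounded_eq_lowdim T(1) by blast
  with T dim show False by simp
qed

text \<open>The punctured sphere is an AR, so the map extends to the ball, where Brouwer applies.\<close>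

lemma sphere_map_missing_point_has_fixpoint:
  fixes h :: "'a::euclidean_space \<Rightarrow> 'a"
  assumes P: "subspace P" and c: "c \<in> sphere 0 1 \<inter> P"
    and conth: "continuous_on (sphere 0 1 \<inter> P) h"
    and him: "h ` (sphere 0 1 \<inter> P) \<subseteq> sphere 0 1 \<inter> P - {c}"
  obtains x where "x \<in> sphere 0 1 \<inter> P" "h x = x"
proof -
  obtain T :: "'a set" where T: "affine T" "aff_dim T = int (dim P) - 1"
    and punct: "\<And>c. c \<in> sphere 0 1 \<inter> P \<Longrightarrow> sphere 0 1 \<inter> P - {c} homeomorphic T"
    using punctured_sphere_Int_subspace_homeomorphic_affine [OF P] by blast
  have "dim P \<noteq> 0" using c by (auto simp: dim_eq_0)
  then have "T \<noteq> {}" using T(2) by auto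
  then have AR: "AR (sphere 0 1 \<inter> P - {c})"
    using AR_homeomorphic_AR [OF convex_imp_AR [OF affine_imp_convex [OF T(1)]] punct [OF c]]
    by (simp add: homeomorphic_sym)
  have "closedin (top_of_set (cball 0 1 \<inter> P)) (sphere 0 1 \<inter> P)"
    by (rule closed_subset) (use P in \<open>auto simp: closed_Int closed_subspace\<close>)
  then obtain H where H: "continuous_on (cball 0 1 \<inter> P) H"
    "H ` (cball 0 1 \<inter> P) \<subseteq> sphere 0 1 \<inter> P - {c}" "\<And>x. x \<in> sphere 0 1 \<inter> P \<Longrightarrow> H x = h x"
    using AR_imp_absolute_extensor [OF AR conth him] by metis
  have "\<exists>x\<in>cball 0 1 \<inter> P. H x = x"
  proof (rule brouwer)
    show "compact (cball 0 1 \<inter> P)" "convex (cball 0 1 \<inter> P)"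
      using P by (simp_all add: closed_subspace compact_Int_closed convex_Int subspace_imp_convex)
    show "cball 0 1 \<inter> P \<noteq> {}" using P subspace_0 by force
    show "H \<in> cball 0 1 \<inter> P \<rightarrow> cball 0 1 \<inter> P" using H(2) by auto
  qed (use H(1) in blast)+
  then obtain x where x: "x \<in> cball 0 1 \<inter> P" "H x = x" by blast
  have "H x \<in> sphere 0 1 \<inter> P - {c}" using H(2) imageI[OF x(1)] by (rule subsetD)
  then have "x \<in> sphere 0 1 \<inter> P" using x(2) by simp
  with that H(3) x(2) show ?thesis by metis
qed

lemma sphere_maps_coincide:
  fixes X Y :: "'a::euclidean_space \<Rightarrow> 'b::euclidean_space"
  assumes S: "subspace S" and P: "subspace P" and dim: "dim S = dim P" "dim P \<ge> 2"
    and contX: "continuous_on (sphere 0 1 \<inter> S) X" and contY: "continuous_on (sphere 0 1 \<inter> S) Y"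
    and Xim: "X ` (sphere 0 1 \<inter> S) \<subseteq> sphere 0 1 \<inter> P"
    and Yim: "Y ` (sphere 0 1 \<inter> S) \<subseteq> sphere 0 1 \<inter> P"
    and injX: "inj_on X (sphere 0 1 \<inter> S)"
    and not_antipodal: "\<And>t t'. t \<in> sphere 0 1 \<inter> S \<Longrightarrow> t' \<in> sphere 0 1 \<inter> S \<Longrightarrow> Y t \<noteq> - Y t'"
  obtains t where "t \<in> sphere 0 1 \<inter> S" "X t = Y t"
proof -
  let ?D = "sphere 0 1 \<inter> S" and ?SP = "sphere 0 1 \<inter> P"
  have "compact ?D" using S by (simp add: closed_subspace compact_Int_closed)
  then obtain g where g: "homeomorphism ?D ?SP X g"
    using homeomorphism_compact [OF _ contX inj_sphere_map_onto [OF S P dim contX injX Xim] injX]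
    by blast
  have gD: "g x \<in> ?D" if "x \<in> ?SP" for x
    using homeomorphism_image2 [OF g] that by blast
  obtain t0 where t0: "t0 \<in> ?D"
    using sphere_Int_subspace_three_points [OF S] dim by metis
  have "Y t0 \<in> ?SP" using Yim t0 by blast
  then have "- Y t0 \<in> ?SP" using P by (simp add: subspace_neg)
  moreover have "continuous_on ?SP (Y \<circ> g)"
    by (rule continuous_on_compose [OF homeomorphism_cont2 [OF g] continuous_on_subset [OF contY]])
       (use homeomorphism_image2 [OF g] in blast)
  moreover have "(Y \<circ> g) ` ?SP \<subseteq> ?SP - {- Y t0}"
    using gD Yim not_antipodal [OF _ t0] by (auto simp: image_subset_iff)
  ultimately obtain x where x: "x \<in> ?SP" "Y (g x) = x"
    using sphere_map_missing_point_has_fixpoint [OF P] by (metis comp_apply)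
  then have "X (g x) = Y (g x)" using homeomorphism_apply2 [OF g] by simp
  with gD [OF x(1)] that show ?thesis by blast
qed

section \<open>Lines and the topology of projective space\<close>

lemma mem_line_of: "w \<in> line_of v \<longleftrightarrow> (\<exists>c. w = c *\<^sub>R v)"
  by (auto simp: line_of_def span_singleton)

lemma line_of_eqE:
  assumes "line_of w = line_of v" "w \<noteq> 0"
  obtains c where "c \<noteq> 0" "w = c *\<^sub>R v"
proof -
  have "w \<in> line_of v" using assms(1) by (metis mem_line_of scaleR_one)
  then show ?thesis using that assms(2) by (auto simp: mem_line_of)
qed

lemma line_of_scale:
  assumes "c \<noteq> 0"
  shows "line_of (c *\<^sub>R v) = line_of v"
proof -
  have "(\<exists>k. w = k *\<^sub>R c *\<^sub>R v) \<longleftrightarrow> (\<exists>k. w = k *\<^sub>R v)" for w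
    using assms by (metis divide_inverse_commute field_class.field_inverse scaleR_one scaleR_scaleR)
  then show ?thesis by (auto simp: mem_line_of)
qed

lemma line_of_sum3: "line_of u + line_of v + line_of w = span {u, v, w}"
proof -
  have "{u, v, w} = {u} \<union> {v} \<union> {w}" by auto
  then have "span {u, v, w} = span ({u} \<union> {v} \<union> {w})" by simp
  also have "\<dots> = line_of u + line_of v + line_of w"
    unfolding span_Un line_of_def set_plus_def by blast
  finally show ?thesis by simp
qed

lemma istopology_proj:
  "istopology (\<lambda>U::'a::real_normed_vector set set. U \<subseteq> proj_space \<and>
      openin (subtopology euclidean (- {0})) {v. v \<noteq> 0 \<and> line_of v \<in> U})"
proof -
  have "{v. v \<noteq> 0 \<and> line_of v \<in> S \<inter> T} =
      {v. v \<noteq> 0 \<and> line_of v \<in> S} \<inter> {v. v \<noteq> 0 \<and> line_of v \<in> T}" for S T :: "'a set set"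
    by auto
  moreover have "{v. v \<noteq> 0 \<and> line_of v \<in> \<Union>K} = (\<Union>S\<in>K. {v. v \<noteq> 0 \<and> line_of v \<in> S})"
    for K :: "'a set set set"
    by auto
  ultimately show ?thesis
    unfolding istopology_def by (auto intro!: openin_Int openin_Union)
qed

lemma openin_proj_topology:
  "openin proj_topology U \<longleftrightarrow> U \<subseteq> proj_space \<and>
      openin (subtopology euclidean (- {0})) {v. v \<noteq> 0 \<and> line_of v \<in> U}"
  unfolding proj_topology_def by (simp add: topology_inverse'[OF istopology_proj])

lemma openin_proj_topology_cone:
  fixes C :: "'a::real_normed_vector set"
  assumes C: "open C" "0 \<notin> C" "\<And>v c. v \<in> C \<Longrightarrow> c \<noteq> 0 \<Longrightarrow> c *\<^sub>R v \<in> C"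
  shows "openin proj_topology (line_of ` C)"
proof -
  have "{v. v \<noteq> 0 \<and> line_of v \<in> line_of ` C} = C"
  proof (intro Set.set_eqI iffI)
    fix v assume v: "v \<in> {v. v \<noteq> 0 \<and> line_of v \<in> line_of ` C}"
    then obtain v' where "v' \<in> C" "line_of v = line_of v'" by auto
    with v show "v \<in> C" using C(3) by (auto elim: line_of_eqE)
  qed (use C(2) in auto)
  moreover have "openin (subtopology euclidean (- {0})) C"
    by (rule open_subset) (use C in auto)
  moreover have "line_of ` C \<subseteq> proj_space" using C(2) by (auto simp: proj_space_def)
  ultimately show ?thesis by (simp add: openin_proj_topology)
qed

lemma continuous_on_chart:
  fixes \<phi> :: "'c::topological_space \<Rightarrow> ('a::real_normed_vector) set"
    and g :: "'a \<Rightarrow> 'b::topological_space"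
  assumes c\<phi>: "continuous_map (top_of_set D) proj_topology \<phi>"
    and C: "open C" "0 \<notin> C" "\<And>v c. v \<in> C \<Longrightarrow> c \<noteq> 0 \<Longrightarrow> c *\<^sub>R v \<in> C"
    and g: "continuous_on C g" "\<And>v c. v \<in> C \<Longrightarrow> c \<noteq> 0 \<Longrightarrow> g (c *\<^sub>R v) = g v"
    and F: "\<And>v. v \<in> C \<Longrightarrow> F (line_of v) = g v"
  shows "continuous_on {t\<in>D. \<phi> t \<in> line_of ` C} (F \<circ> \<phi>)"
proof -
  have preimage: "openin (top_of_set D) {t\<in>D. \<phi> t \<in> line_of ` {v\<in>C. g v \<in> W}}"
    if "open W" for W
  proof -
    have "open {v\<in>C. g v \<in> W}"
      using continuous_open_preimage[OF g(1) C(1) \<open>open W\<close>] by (simp add: vimage_def Int_def conj_commute)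
    then have "openin proj_topology (line_of ` {v\<in>C. g v \<in> W})"
      by (rule openin_proj_topology_cone) (use C g(2) in auto)
    from openin_continuous_map_preimage[OF c\<phi> this] show ?thesis by simp
  qed
  let ?D' = "{t\<in>D. \<phi> t \<in> line_of ` C}"
  have eq: "{t \<in> ?D'. (F \<circ> \<phi>) t \<in> W} = {t\<in>D. \<phi> t \<in> line_of ` {v\<in>C. g v \<in> W}}" for W
    using F by force
  have "openin (top_of_set ?D') {t \<in> ?D'. (F \<circ> \<phi>) t \<in> W}" if "open W" for W
    unfolding eq by (rule openin_subset_trans[OF preimage[OF that]]) auto
  then have "continuous_map (top_of_set ?D') euclidean (F \<circ> \<phi>)"
    by (simp add: continuous_map_def)
  then show ?thesis by simp
qed

section \<open>Signatures of symmetric bilinear forms\<close>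

lemma finite_dims: "finite {dim U | U::'a::euclidean_space set. Q U}"
proof -
  have "{dim U | U::'a set. Q U} \<subseteq> {..DIM('a)}"
    using dim_subset_UNIV by fastforce
  then show ?thesis using finite_subset by blast
qed

lemma pos_index_witness:
  fixes b :: "'a::euclidean_space \<Rightarrow> 'a \<Rightarrow> real"
  assumes "subspace W"
  obtains U where "subspace U" "U \<subseteq> W" "\<forall>u\<in>U. u \<noteq> 0 \<longrightarrow> b u u > 0" "dim U = pos_index b W"
proof -
  let ?S = "{dim U | U. subspace U \<and> U \<subseteq> W \<and> (\<forall>u\<in>U. u \<noteq> 0 \<longrightarrow> b u u > 0)}"
  have "dim {0::'a} \<in> ?S" using assms subspace_0 by (auto intro!: exI[of _ "{0}"])
  then have "Max ?S \<in> ?S" using finite_dims by (intro Max_in) auto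
  then show ?thesis using that unfolding pos_index_def by auto
qed

lemma neg_index_witness:
  fixes b :: "'a::euclidean_space \<Rightarrow> 'a \<Rightarrow> real"
  assumes "subspace W"
  obtains U where "subspace U" "U \<subseteq> W" "\<forall>u\<in>U. u \<noteq> 0 \<longrightarrow> b u u < 0" "dim U = neg_index b W"
proof -
  let ?S = "{dim U | U. subspace U \<and> U \<subseteq> W \<and> (\<forall>u\<in>U. u \<noteq> 0 \<longrightarrow> b u u < 0)}"
  have "dim {0::'a} \<in> ?S" using assms subspace_0 by (auto intro!: exI[of _ "{0}"])
  then have "Max ?S \<in> ?S" using finite_dims by (intro Max_in) auto
  then show ?thesis using that unfolding neg_index_def by auto
qed

lemma subspaces_Int_nontrivial:
  fixes A B W :: "'a::euclidean_space set"
  assumes "subspace A" "subspace B" "A \<subseteq> W" "B \<subseteq> W" "subspace W" "dim W < dim A + dim B"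
  obtains z where "z \<in> A" "z \<in> B" "z \<noteq> 0"
proof (rule ccontr)
  assume "\<not> thesis"
  with that have "dim (A \<inter> B) = 0" by (auto simp: dim_eq_0)
  moreover have "dim {x + y |x y. x \<in> A \<and> y \<in> B} \<le> dim W"
    using assms subspace_add by (intro dim_subset) blast
  ultimately show False using dim_sums_Int[OF assms(1,2)] assms(6) by linarith
qed

lemma dim_span_insert_le: "dim (span (insert (w::'a::euclidean_space) S)) \<le> dim (span S) + 1"
  using dim_insert[of w S] by (simp split: if_splits)

lemma span_pairE:
  assumes "z \<in> span {u, v}"
  obtains \<alpha> \<beta> where "z = \<alpha> *\<^sub>R u + \<beta> *\<^sub>R v"
  using assms by (auto simp: span_insert span_singleton) (metis diff_add_cancel add.commute)

lemma signature_2_1_no_nonpositive_plane: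
  fixes b :: "'a::euclidean_space \<Rightarrow> 'a \<Rightarrow> real"
  assumes sig: "has_signature b W 2 1" and W: "subspace W"
    and L: "subspace L" "L \<subseteq> W" "dim L \<ge> 2" "\<forall>z\<in>L. b z z \<le> 0"
  shows False
proof -
  obtain Q where Q: "subspace Q" "Q \<subseteq> W" "\<forall>u\<in>Q. u \<noteq> 0 \<longrightarrow> b u u > 0" "dim Q = 2"
    using pos_index_witness[OF W] sig by (metis has_signature_def)
  have "dim W = 3" using sig by (simp add: has_signature_def)
  then obtain z where "z \<in> Q" "z \<in> L" "z \<noteq> 0"
    using subspaces_Int_nontrivial[OF Q(1) L(1) Q(2) L(2) W] Q(4) L(3) by auto
  then show False using Q(3) L(4) by force
qed

lemma positive_triple_span:
  assumes "positive_triple b (line_of x) (line_of y) (line_of z)"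
  shows "has_signature b (span {x, y, z}) 2 1" "dim (span {x, y, z}) = 3"
  using assms line_of_sum3[of x y z] by (auto simp: positive_triple_def)

locale sym_bilinear =
  fixes b :: "'a::euclidean_space \<Rightarrow> 'a \<Rightarrow> real"
  assumes bilinear: "bilinear b" and sym: "\<And>x y. b x y = b y x"
begin

lemmas b_simps = bilinear_ladd[OF bilinear] bilinear_radd[OF bilinear]
  bilinear_lmul[OF bilinear] bilinear_rmul[OF bilinear]
  bilinear_lsub[OF bilinear] bilinear_rsub[OF bilinear]
  bilinear_lneg[OF bilinear] bilinear_rneg[OF bilinear]
  bilinear_lzero[OF bilinear] bilinear_rzero[OF bilinear]

text \<open>If \<open>b u v = 0\<close>, the form vanishes on the plane \<open>span {u, v}\<close>.\<close>

lemma signature_2_1_isotropic_pairing_nonzero: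
  assumes sig: "has_signature b (span {w, u, v}) 2 1" and d3: "dim (span {w, u, v}) = 3"
    and uu: "b u u = 0" and vv: "b v v = 0"
  shows "b u v \<noteq> 0"
proof
  assume uv: "b u v = 0"
  show False
  proof (rule signature_2_1_no_nonpositive_plane[OF sig subspace_span])
    show "span {u, v} \<subseteq> span {w, u, v}" by (rule span_mono) auto
    show "2 \<le> dim (span {u, v})" using dim_span_insert_le[of w "{u, v}"] d3 by simp
    show "\<forall>z\<in>span {u, v}. b z z \<le> 0"
    proof
      fix z assume "z \<in> span {u, v}"
      then obtain \<alpha> \<beta> where z: "z = \<alpha> *\<^sub>R u + \<beta> *\<^sub>R v" by (rule span_pairE)
      show "b z z \<le> 0" unfolding z using uu vv uv by (simp add: b_simps sym[of v u])
    qed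
  qed simp
qed

text \<open>Otherwise the plane spanned by \<open>w\<close> and \<open>b w v u - b w u v\<close> would be nonpositive.\<close>

lemma signature_2_1_isotropic_pairing_neg:
  assumes sig: "has_signature b (span {w, u, v}) 2 1" and d3: "dim (span {w, u, v}) = 3"
    and ww: "b w w = 0" and uu: "b u u = 0" and vv: "b v v = 0"
    and wu: "b w u < 0" and wv: "b w v < 0"
  shows "b u v < 0"
proof (rule ccontr)
  assume uv: "\<not> b u v < 0"
  define m where "m = b w v *\<^sub>R u - b w u *\<^sub>R v"
  show False
  proof (rule signature_2_1_no_nonpositive_plane[OF sig subspace_span])
    have "m \<in> span {w, u, v}" unfolding m_def
      by (intro span_diff span_mul span_base) auto
    then show "span {w, m} \<subseteq> span {w, u, v}"
      by (intro span_minimal) (auto intro: span_base)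
    have "u = (1 / b w v) *\<^sub>R (m + b w u *\<^sub>R v)" using wv by (simp add: m_def)
    also have "\<dots> \<in> span {v, w, m}"
      by (intro span_mul span_add span_base) auto
    finally have "span {w, u, v} \<subseteq> span {v, w, m}"
      by (intro span_minimal) (auto intro: span_base)
    then have "dim (span {w, u, v}) \<le> dim (span {v, w, m})" by (rule dim_subset)
    then show "2 \<le> dim (span {w, m})" using dim_span_insert_le[of v "{w, m}"] d3 by simp
    show "\<forall>z\<in>span {w, m}. b z z \<le> 0"
    proof
      fix z assume "z \<in> span {w, m}"
      then obtain \<alpha> \<beta> where z: "z = \<alpha> *\<^sub>R w + \<beta> *\<^sub>R m" by (rule span_pairE)
      have "b z z = - 2 * (b w u * b w v) * b u v * \<beta>\<^sup>2"
        unfolding z m_def using ww uu vv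
        by (simp add: b_simps sym[of v u] sym[of u w] sym[of v w] algebra_simps power2_eq_square)
      moreover have "b w u * b w v > 0" using wu wv by (simp add: mult_neg_neg)
      ultimately show "b z z \<le> 0" using uv by (simp add: mult_nonneg_nonneg)
    qed
  qed simp
qed

lemma b_unit_eq_if_sgn_eq:
  assumes "sgn x = sgn y" "b x x = 1" "b y y = 1"
  shows "x = y"
proof -
  have x0: "x \<noteq> 0" and y0: "y \<noteq> 0" using assms(2,3) by (auto simp: b_simps)
  have "x = norm x *\<^sub>R sgn x" using x0 by (simp add: sgn_div_norm)
  also have "\<dots> = (norm x / norm y) *\<^sub>R y" using assms(1) by (simp add: sgn_div_norm divide_inverse)
  finally obtain l where l: "x = l *\<^sub>R y" "l > 0" using x0 y0 by fastforce
  then have "b x x = l\<^sup>2 * b y y" by (simp add: b_simps power2_eq_square)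
  then have "l\<^sup>2 = 1" using assms by simp
  then have "l = 1" using l(2) by (simp add: power2_eq_1_iff)
  then show ?thesis using l(1) by simp
qed

lemma b_unit_sgn_neq:
  assumes "b x x = 1" "b y y = 1" "b x y < 1"
  shows "sgn x \<noteq> sgn y"
  using assms b_unit_eq_if_sgn_eq by force

lemma b_unit_sgn_not_antipodal:
  assumes "b x x = 1" "b y y = 1" "b x y > - 1"
  shows "sgn x \<noteq> - sgn y"
proof
  assume "sgn x = - sgn y"
  then have "x = - y" using b_unit_eq_if_sgn_eq[of x "- y"] assms by (simp add: sgn_minus b_simps)
  then show False using assms by (simp add: b_simps)
qed

text \<open>Riesz representative of \<open>b _ e\<close>: it turns \<open>b\<close>-orthogonal complements into Euclidean ones.\<close>

definition representer :: "'a \<Rightarrow> 'a" where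
  "representer e = (\<Sum>i\<in>Basis. b i e *\<^sub>R i)"

lemma inner_representer: "representer e \<bullet> v = b v e"
proof -
  have lin: "linear (\<lambda>x. b x e)" using bilinear by (simp add: bilinear_def)
  have "b v e = b (\<Sum>i\<in>Basis. (v \<bullet> i) *\<^sub>R i) e" by (simp add: euclidean_representation)
  also have "\<dots> = (\<Sum>i\<in>Basis. (v \<bullet> i) * b i e)"
    by (simp add: linear_sum[OF lin] linear_scale[OF lin] o_def)
  also have "\<dots> = representer e \<bullet> v"
    by (simp add: representer_def inner_sum_left inner_commute mult.commute inner_sum_right)
  finally show ?thesis by simp
qed

lemma linear_representer: "linear representer"
  by (rule linearI) (simp_all add: representer_def b_simps scaleR_add_left sum.distrib scaleR_sum_right)

lemma dim_b_orthogonal_complement: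
  assumes "subspace P"
  shows "dim {v. \<forall>e\<in>P. b v e = 0} + dim P \<ge> DIM('a)"
proof -
  have eq: "{v. \<forall>e\<in>P. b v e = 0} = {y \<in> UNIV. \<forall>x \<in> representer ` P. orthogonal x y}"
    by (auto simp: orthogonal_def inner_representer)
  have "dim {v. \<forall>e\<in>P. b v e = 0} + dim (representer ` P) = DIM('a)"
    unfolding eq dim_UNIV[symmetric]
    by (rule dim_subspace_orthogonal_to_vectors)
       (use linear_subspace_image[OF linear_representer assms] in auto)
  moreover have "dim (representer ` P) \<le> dim P" using linear_representer by (rule dim_image_le)
  ultimately show ?thesis by linarith
qed

lemma b_orthogonal_complement_neg_definite:
  assumes sig: "has_signature b UNIV p r"
    and P: "subspace P" "\<forall>x\<in>P. x \<noteq> 0 \<longrightarrow> b x x > 0" "dim P = p"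
    and v: "\<forall>e\<in>P. b v e = 0" "v \<noteq> 0"
  shows "b v v < 0"
proof (rule ccontr)
  assume vv: "\<not> b v v < 0"
  obtain M where M: "subspace M" "\<forall>x\<in>M. x \<noteq> 0 \<longrightarrow> b x x < 0" "dim M = r"
    using neg_index_witness[OF subspace_UNIV] sig by (metis has_signature_def)
  have "v \<notin> span P" using P(1,2) v by (auto simp: span_eq_iff[THEN iffD2])
  then have dW: "dim (span (insert v P)) = p + 1" using P(3) by (simp add: dim_insert)
  have semi: "b z z \<ge> 0" if z: "z \<in> span (insert v P)" for z
  proof -
    obtain k where "z - k *\<^sub>R v \<in> span P" using z unfolding span_insert by blast
    then obtain x where x: "x \<in> P" "z = x + k *\<^sub>R v" using P(1)
      by (metis add.commute diff_add_cancel span_eq_iff)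
    have "b x v = 0" using v(1) x(1) sym by metis
    then have "b z z = b x x + k * k * b v v"
      by (simp add: x b_simps sym[of v x] algebra_simps)
    moreover have "b x x \<ge> 0" using P(2) x(1) by (cases "x = 0") (auto simp: b_simps less_imp_le)
    ultimately show ?thesis using vv by simp
  qed
  have "dim (UNIV :: 'a set) = p + r" using sig by (simp add: has_signature_def)
  then obtain z where "z \<in> span (insert v P)" "z \<in> M" "z \<noteq> 0"
    using subspaces_Int_nontrivial[of "span (insert v P)" M UNIV] M dW by auto
  then show False using semi M(2) by force
qed

lemma orthogonal_splitting_exists:
  assumes sig: "has_signature b UNIV p r"
  obtains P N where "subspace P" "subspace N" "dim P = p" "dim N = r"
    "\<forall>x\<in>P. x \<noteq> 0 \<longrightarrow> b x x > 0" "\<forall>y\<in>N. y \<noteq> 0 \<longrightarrow> b y y < 0"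
    "\<forall>x\<in>P. \<forall>y\<in>N. b x y = 0" "\<forall>u. \<exists>x\<in>P. \<exists>y\<in>N. u = x + y"
proof -
  have dU: "DIM('a) = p + r" using sig by (simp add: has_signature_def)
  obtain P where P: "subspace P" "P \<subseteq> UNIV" "\<forall>x\<in>P. x \<noteq> 0 \<longrightarrow> b x x > 0" "dim P = p"
    using pos_index_witness[OF subspace_UNIV] sig by (metis has_signature_def)
  define N where "N = {v. \<forall>e\<in>P. b v e = 0}"
  have subN: "subspace N" unfolding N_def subspace_def by (simp add: b_simps)
  have orth: "\<forall>x\<in>P. \<forall>y\<in>N. b x y = 0" by (auto simp: N_def sym)
  have negN: "\<forall>y\<in>N. y \<noteq> 0 \<longrightarrow> b y y < 0"
    using b_orthogonal_complement_neg_definite[OF sig P(1,3,4)] by (auto simp: N_def)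
  define S where "S = {x + y |x y. x \<in> P \<and> y \<in> N}"
  have "P \<inter> N \<subseteq> {0}" using P(3) orth by fastforce
  then have "dim (P \<inter> N) = 0" by simp
  then have dS: "dim S = p + dim N"
    using dim_sums_Int[OF P(1) subN] P(4) unfolding S_def by linarith
  moreover have "dim N \<ge> r" using dim_b_orthogonal_complement[OF P(1)] P(4) dU by (simp add: N_def)
  moreover have "dim S \<le> p + r" using dim_subset_UNIV[of S] dU by simp
  ultimately have dN: "dim N = r" by linarith
  then have "dim S = DIM('a)" using dS dU by simp
  then have "span S = UNIV" by (rule dim_eq_full[THEN iffD1])
  moreover have "subspace S" unfolding S_def by (rule subspace_sums[OF P(1) subN])
  ultimately have "S = UNIV" by (metis span_eq_iff)
  then have "\<forall>u. \<exists>x\<in>P. \<exists>y\<in>N. u = x + y" unfolding S_def by blast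
  from that[OF P(1) subN P(4) dN P(3) negN orth this] show ?thesis .
qed

end

section \<open>Orthogonal splittings\<close>

locale orthogonal_splitting = sym_bilinear b for b :: "'a::euclidean_space \<Rightarrow> 'a \<Rightarrow> real" +
  fixes P N :: "'a set"
  assumes subspace_P: "subspace P" and subspace_N: "subspace N"
    and pos_P: "\<forall>x\<in>P. x \<noteq> 0 \<longrightarrow> b x x > 0" and neg_N: "\<forall>y\<in>N. y \<noteq> 0 \<longrightarrow> b y y < 0"
    and orth_PN: "\<forall>x\<in>P. \<forall>y\<in>N. b x y = 0" and sum_PN: "\<forall>u. \<exists>x\<in>P. \<exists>y\<in>N. u = x + y"
begin

lemma P_Int_N: "v \<in> P \<Longrightarrow> v \<in> N \<Longrightarrow> v = 0"
  using pos_P orth_PN by force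

lemma splitting_unique:
  assumes "x \<in> P" "y \<in> N" "x' \<in> P" "y' \<in> N" "x + y = x' + y'"
  shows "x = x'"
proof -
  have "x - x' = y' - y" using assms(5) by (simp add: algebra_simps)
  moreover have "x - x' \<in> P" using assms subspace_P subspace_diff by blast
  moreover have "y' - y \<in> N" using assms subspace_N subspace_diff by blast
  ultimately show ?thesis using P_Int_N by force
qed

definition projP :: "'a \<Rightarrow> 'a" where "projP u = (THE x. x \<in> P \<and> u - x \<in> N)"

definition projN :: "'a \<Rightarrow> 'a" where "projN u = u - projP u"

lemma projP_in: "projP u \<in> P" and projN_in: "projN u \<in> N"
proof -
  obtain x y where xy: "x \<in> P" "y \<in> N" "u = x + y" using sum_PN by blast
  have "(THE x. x \<in> P \<and> u - x \<in> N) = x"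
    by (rule the_equality) (use xy splitting_unique[of _ "u - _" x y] in auto)
  then show "projP u \<in> P" "projN u \<in> N" using xy by (simp_all add: projP_def projN_def)
qed

lemma projP_add_projN: "projP u + projN u = u"
  by (simp add: projN_def)

lemma projP_eq: "x \<in> P \<Longrightarrow> y \<in> N \<Longrightarrow> projP (x + y) = x"
  using splitting_unique[of "projP (x + y)" "projN (x + y)" x y] projP_in projN_in projP_add_projN
  by metis

lemma linear_projP: "linear projP"
proof (rule linearI)
  fix u v
  have "u + v = (projP u + projP v) + (projN u + projN v)"
    by (simp add: projN_def algebra_simps)
  then have "projP (u + v) = projP ((projP u + projP v) + (projN u + projN v))"
    by simp
  also have "\<dots> = projP u + projP v"
    by (rule projP_eq) (use projP_in projN_in subspace_P subspace_N subspace_add in blast)+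
  finally show "projP (u + v) = projP u + projP v" .
next
  fix c u
  have "projP (c *\<^sub>R u) = projP (c *\<^sub>R projP u + c *\<^sub>R projN u)"
    by (simp add: projP_add_projN flip: scaleR_add_right)
  also have "\<dots> = c *\<^sub>R projP u"
    by (rule projP_eq) (use projP_in projN_in subspace_P subspace_N subspace_scale in blast)+
  finally show "projP (c *\<^sub>R u) = c *\<^sub>R projP u" .
qed

lemma linear_projN: "linear projN"
  unfolding projN_def by (intro linear_compose_sub linear_projP linear_id[unfolded id_def])

lemma continuous_on_projP: "continuous_on S projP"
  using linear_continuous_on linear_conv_bounded_linear linear_projP by blast

lemma b_split: "b u v = b (projP u) (projP v) + b (projN u) (projN v)"
proof -
  have "b u v = b (projP u + projN u) (projP v + projN v)" by (simp add: projP_add_projN)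
  also have "\<dots> = b (projP u) (projP v) + b (projN u) (projN v)"
    using orth_PN projP_in projN_in by (simp add: b_simps sym[of "projN u"])
  finally show ?thesis .
qed

lemma b_nonneg_P: "x \<in> P \<Longrightarrow> b x x \<ge> 0"
  using pos_P by (cases "x = 0") (auto simp: b_simps less_imp_le)

lemma isotropic_projP_pos: "b u u = 0 \<Longrightarrow> u \<noteq> 0 \<Longrightarrow> b (projP u) (projP u) > 0"
proof (rule ccontr)
  assume u: "b u u = 0" "u \<noteq> 0" "\<not> b (projP u) (projP u) > 0"
  then have "projP u = 0" using pos_P projP_in by blast
  then have "projN u = u" using projP_add_projN by (metis add_0)
  then have "b u u < 0" using neg_N projN_in u(2) by metis
  then show False using u by simp
qed

lemma b_unit_P_bounds:
  assumes "x \<in> P" "y \<in> P" "b x x = 1" "b y y = 1"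
  shows "b x y \<le> 1" "- 1 \<le> b x y"
proof -
  have "x - y \<in> P" "x + y \<in> P" using assms subspace_P subspace_diff subspace_add by blast+
  then have "b (x - y) (x - y) \<ge> 0" "b (x + y) (x + y) \<ge> 0" using b_nonneg_P by blast+
  then show "b x y \<le> 1" "- 1 \<le> b x y" using assms by (simp_all add: b_simps sym[of y x])
qed

text \<open>\<open>b\<close>-unit vectors of \<open>P\<close> pair in \<open>[-1, 1]\<close>, so the strict inequality makes \<open>X\<close> injective
  and forbids antipodal values of \<open>Y\<close>.\<close>

lemma b_unit_maps_coincide:
  fixes X Y :: "'c::euclidean_space \<Rightarrow> 'a"
  assumes S: "subspace S" "dim S = dim P" "dim P \<ge> 2"
    and cont: "continuous_on (sphere 0 1 \<inter> S) X" "continuous_on (sphere 0 1 \<inter> S) Y"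
    and in_P: "\<And>t. X t \<in> P" "\<And>t. Y t \<in> P"
    and unit: "\<And>t. t \<in> sphere 0 1 \<inter> S \<Longrightarrow> b (X t) (X t) = 1 \<and> b (Y t) (Y t) = 1"
    and less: "\<And>t t'. t \<in> sphere 0 1 \<inter> S \<Longrightarrow> t' \<in> sphere 0 1 \<inter> S \<Longrightarrow> t \<noteq> t' \<Longrightarrow>
                 b (X t) (X t') < b (Y t) (Y t')"
  obtains t where "t \<in> sphere 0 1 \<inter> S" "X t = Y t"
proof -
  let ?D = "sphere 0 1 \<inter> S"
  have nonzero: "X t \<noteq> 0" "Y t \<noteq> 0" if "t \<in> ?D" for t
    using unit[OF that] by (auto simp: b_simps)
  have bounds: "- 1 \<le> b (X t) (X t')" "b (Y t) (Y t') \<le> 1" if "t \<in> ?D" "t' \<in> ?D" for t t'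
    using b_unit_P_bounds(2)[OF in_P(1) in_P(1)] b_unit_P_bounds(1)[OF in_P(2) in_P(2)]
      unit[OF that(1)] unit[OF that(2)] by simp_all
  have "\<exists>t\<in>?D. sgn (X t) = sgn (Y t)"
  proof (rule sphere_maps_coincide[OF S(1) subspace_P S(2,3)])
    show "continuous_on ?D (\<lambda>t. sgn (X t))" "continuous_on ?D (\<lambda>t. sgn (Y t))"
      using cont nonzero by (auto intro!: continuous_intros)
    show "(\<lambda>t. sgn (X t)) ` ?D \<subseteq> sphere 0 1 \<inter> P" "(\<lambda>t. sgn (Y t)) ` ?D \<subseteq> sphere 0 1 \<inter> P"
      using in_P nonzero subspace_scale[OF subspace_P] by (auto simp: norm_sgn sgn_div_norm)
    show "inj_on (\<lambda>t. sgn (X t)) ?D"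
    proof (rule inj_onI, rule ccontr)
      fix t t' assume t: "t \<in> ?D" "t' \<in> ?D" "sgn (X t) = sgn (X t')" "t \<noteq> t'"
      then have "b (X t) (X t') < 1" using less[OF t(1,2,4)] bounds(2)[OF t(1,2)] by linarith
      then show False using b_unit_sgn_neq unit t by metis
    qed
    show "sgn (Y t) \<noteq> - sgn (Y t')" if t: "t \<in> ?D" "t' \<in> ?D" for t t'
    proof (cases "t = t'")
      case True
      then show ?thesis using b_unit_sgn_not_antipodal unit t by simp
    next
      case False
      then have "b (Y t) (Y t') > - 1" using less[OF t False] bounds(1)[OF t] by linarith
      then show ?thesis using b_unit_sgn_not_antipodal unit t by blast
    qed
  qed blast
  then show ?thesis using that b_unit_eq_if_sgn_eq unit by metis
qed

lemma continuous_on_b_left: "continuous_on S (\<lambda>v. b w v)"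
  using bilinear_continuous_on_compose[OF continuous_on_const continuous_on_id bilinear] by simp

lemma continuous_on_b_projP: "continuous_on S (\<lambda>v. b (projP v) (projP v))"
  using bilinear_continuous_on_compose[OF continuous_on_projP continuous_on_projP bilinear] by simp

lemma b_projP_scale: "b (projP (c *\<^sub>R v)) (projP (c *\<^sub>R v)) = c\<^sup>2 * b (projP v) (projP v)"
  by (simp add: linear_scale[OF linear_projP] b_simps power2_eq_square)

definition chart_dom :: "'a \<Rightarrow> 'a set" where
  "chart_dom w = {v. b w v \<noteq> 0 \<and> 0 < b (projP v) (projP v)}"

definition unit_normalize :: "'a \<Rightarrow> 'a \<Rightarrow> 'a" where
  "unit_normalize w v = ((if b w v < 0 then 1 else -1) / sqrt (b (projP v) (projP v))) *\<^sub>R v"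

definition lift :: "'a \<Rightarrow> 'a set \<Rightarrow> 'a" where
  "lift w l = unit_normalize w (SOME v. v \<in> chart_dom w \<and> line_of v = l)"

lemma open_chart_dom: "open (chart_dom w)"
proof -
  have "chart_dom w = {v. b w v \<noteq> 0} \<inter> {v. 0 < b (projP v) (projP v)}"
    by (auto simp: chart_dom_def)
  then show ?thesis
    using open_Collect_neq[OF continuous_on_b_left continuous_on_const]
      open_Collect_less[OF continuous_on_const continuous_on_b_projP] by auto
qed

lemma zero_notin_chart_dom: "0 \<notin> chart_dom w"
  by (simp add: chart_dom_def b_simps)

lemma chart_dom_scale: "v \<in> chart_dom w \<Longrightarrow> c \<noteq> 0 \<Longrightarrow> c *\<^sub>R v \<in> chart_dom w"
  by (simp add: chart_dom_def b_projP_scale b_simps)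

lemma unit_normalize_scale:
  assumes v: "v \<in> chart_dom w" and c: "c \<noteq> 0"
  shows "unit_normalize w (c *\<^sub>R v) = unit_normalize w v"
proof -
  define r where "r = sqrt (b (projP v) (projP v))"
  have r: "r > 0" using v by (simp add: chart_dom_def r_def)
  have sq: "sqrt (b (projP (c *\<^sub>R v)) (projP (c *\<^sub>R v))) = \<bar>c\<bar> * r"
    by (simp add: b_projP_scale real_sqrt_mult r_def)
  have "b w v \<noteq> 0" using v by (simp add: chart_dom_def)
  then show ?thesis
    using c r by (cases "c > 0") (auto simp: unit_normalize_def sq r_def[symmetric] b_simps mult_less_0_iff)
qed

lemma lift_line_of: "v \<in> chart_dom w \<Longrightarrow> lift w (line_of v) = unit_normalize w v"
proof -
  assume v: "v \<in> chart_dom w"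
  define v' where "v' = (SOME v'. v' \<in> chart_dom w \<and> line_of v' = line_of v)"
  have "v' \<in> chart_dom w \<and> line_of v' = line_of v"
    unfolding v'_def by (rule someI[of _ v]) (use v in simp)
  then obtain c where "c \<noteq> 0" "v' = c *\<^sub>R v"
    using zero_notin_chart_dom by (metis line_of_eqE)
  then show ?thesis using unit_normalize_scale[OF v] by (simp add: lift_def v'_def[symmetric])
qed

lemma continuous_on_unit_normalize: "continuous_on (chart_dom w) (unit_normalize w)"
proof -
  let ?C1 = "{v. b w v < 0 \<and> 0 < b (projP v) (projP v)}"
  let ?C2 = "{v. b w v > 0 \<and> 0 < b (projP v) (projP v)}"
  have eq: "chart_dom w = ?C1 \<union> ?C2" by (auto simp: chart_dom_def)
  have "open ?C1" "open ?C2"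
    using open_Collect_less[OF continuous_on_b_left continuous_on_const, of w 0]
      open_Collect_less[OF continuous_on_const continuous_on_b_left, of 0 w]
      open_Collect_less[OF continuous_on_const continuous_on_b_projP, of 0]
    by (simp_all add: Collect_conj_eq open_Int)
  moreover have "continuous_on ?C1 (unit_normalize w)"
  proof (rule continuous_on_eq)
    show "continuous_on ?C1 (\<lambda>v. (1 / sqrt (b (projP v) (projP v))) *\<^sub>R v)"
      by (intro continuous_intros continuous_on_b_projP) auto
  qed (simp add: unit_normalize_def)
  moreover have "continuous_on ?C2 (unit_normalize w)"
  proof (rule continuous_on_eq)
    show "continuous_on ?C2 (\<lambda>v. (-1 / sqrt (b (projP v) (projP v))) *\<^sub>R v)"
      by (intro continuous_intros continuous_on_b_projP) auto
  qed (simp add: unit_normalize_def)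
  ultimately show ?thesis unfolding eq by (rule continuous_on_open_Un)
qed

lemma unit_normalize:
  assumes v: "v \<in> chart_dom w"
  shows "line_of (unit_normalize w v) = line_of v" "unit_normalize w v \<noteq> 0"
    and "b (projP (unit_normalize w v)) (projP (unit_normalize w v)) = 1"
    and "b w (unit_normalize w v) < 0"
proof -
  define r where "r = sqrt (b (projP v) (projP v))"
  have r: "r > 0" "r\<^sup>2 = b (projP v) (projP v)" using v by (simp_all add: chart_dom_def r_def)
  define k where "k = (if b w v < 0 then 1 else -1) / r"
  have k: "k \<noteq> 0" "k\<^sup>2 * r\<^sup>2 = 1" "unit_normalize w v = k *\<^sub>R v"
    using r by (simp_all add: k_def unit_normalize_def r_def power_divide)
  show "line_of (unit_normalize w v) = line_of v" using k line_of_scale by simp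
  show "unit_normalize w v \<noteq> 0" using k v zero_notin_chart_dom by force
  show "b (projP (unit_normalize w v)) (projP (unit_normalize w v)) = 1"
    using k r by (simp add: b_projP_scale)
  have "b w v \<noteq> 0" using v by (simp add: chart_dom_def)
  then show "b w (unit_normalize w v) < 0"
    using r by (auto simp: k(3) k_def b_simps divide_less_0_iff)
qed

lemma continuous_on_lift:
  fixes \<phi> :: "'c::topological_space \<Rightarrow> 'a set"
  assumes "continuous_map (top_of_set D) proj_topology \<phi>"
  shows "continuous_on {t\<in>D. \<phi> t \<in> line_of ` chart_dom w} (lift w \<circ> \<phi>)"
  using continuous_on_chart[OF assms open_chart_dom zero_notin_chart_dom chart_dom_scale
      continuous_on_unit_normalize unit_normalize_scale lift_line_of] by blast

lemma unit_normalized_unique: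
  assumes "y = c *\<^sub>R x" "b (projP x) (projP x) = 1" "b (projP y) (projP y) = 1"
    and "b w x < 0" "b w y < 0"
  shows "y = x"
proof -
  have "c\<^sup>2 = 1" using assms(1-3) b_projP_scale by simp
  moreover have "c > 0" using assms(1,4,5) by (simp add: b_simps mult_less_0_iff)
  ultimately have "c = 1" by (simp add: power2_eq_1_iff)
  then show ?thesis using assms(1) by simp
qed

end

locale isotropic_graph = orthogonal_splitting b P N for b :: "'a::euclidean_space \<Rightarrow> 'a \<Rightarrow> real" and P N +
  fixes V :: "'a set"
  assumes subspace_V: "subspace V" and isotropic_V: "\<forall>x\<in>V. \<forall>y\<in>V. b x y = 0"
    and dim_V: "dim V = dim N"
begin

lemma inj_on_projN_V: "inj_on projN V"
proof (rule linear_inj_on_iff_eq_0[THEN iffD2, OF linear_projN subspace_V], intro ballI impI)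
  fix v assume v: "v \<in> V" "projN v = 0"
  then have "v \<in> P" using projP_in projP_add_projN by (metis add_0_right)
  moreover have "b v v = 0" using isotropic_V v by blast
  ultimately show "v = 0" using pos_P by force
qed

lemma projN_image_V: "projN ` V = N"
proof (rule subspace_dim_equal)
  show "subspace (projN ` V)" using linear_subspace_image[OF linear_projN subspace_V] .
  show "projN ` V \<subseteq> N" using projN_in by blast
  have "dim (projN ` V) = dim V"
    by (rule dim_image_eq[OF linear_projN])
       (use inj_on_projN_V subspace_V in \<open>simp add: span_eq_iff[THEN iffD2]\<close>)
  then show "dim N \<le> dim (projN ` V)" using dim_V by simp
qed (rule subspace_N)

definition V_point :: "'a \<Rightarrow> 'a" where "V_point u = (THE w. w \<in> V \<and> projN w = projN u)"

lemma V_point: "V_point u \<in> V" "projN (V_point u) = projN u"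
proof -
  obtain w where w: "w \<in> V" "projN w = projN u" using projN_image_V projN_in by (metis imageE)
  have "(THE w. w \<in> V \<and> projN w = projN u) = w"
    by (rule the_equality) (use w inj_on_projN_V in \<open>auto simp: inj_on_def\<close>)
  then show "V_point u \<in> V" "projN (V_point u) = projN u" using w by (simp_all add: V_point_def)
qed

lemma V_point_eq: "w \<in> V \<Longrightarrow> projN w = projN u \<Longrightarrow> V_point u = w"
  using V_point inj_on_projN_V by (metis inj_on_def)

lemma linear_V_point: "linear V_point"
proof (rule linearI)
  fix u v show "V_point (u + v) = V_point u + V_point v"
    by (rule V_point_eq)
       (use V_point subspace_add[OF subspace_V] linear_add[OF linear_projN] in auto)
next
  fix c u show "V_point (c *\<^sub>R u) = c *\<^sub>R V_point u"
    by (rule V_point_eq)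
       (use V_point subspace_scale[OF subspace_V] linear_scale[OF linear_projN] in auto)
qed

definition partner :: "'a \<Rightarrow> 'a" where "partner u = projP (V_point u)"

lemma linear_partner: "linear partner"
  unfolding partner_def using linear_compose[OF linear_V_point linear_projP] by (simp add: o_def)

lemma partner_in: "partner u \<in> P"
  by (simp add: partner_def projP_in)

lemma b_partner: "b (partner u) (partner v) = - b (projN u) (projN v)"
proof -
  have "0 = b (V_point u) (V_point v)" using isotropic_V V_point by metis
  also have "\<dots> = b (partner u) (partner v) + b (projN u) (projN v)"
    using b_split[of "V_point u" "V_point v"] V_point by (simp add: partner_def)
  finally show ?thesis by simp
qed

lemma in_V_if_projP_eq_partner: "projP u = partner u \<Longrightarrow> u \<in> V"
  using projP_add_projN[of u] projP_add_projN[of "V_point u"] V_point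
  by (metis partner_def)

text \<open>\<open>b\<close> splits as the difference of the pairings of the \<open>P\<close>-components and of the partners,
  and a lift whose \<open>P\<close>-component equals its partner lies in \<open>V\<close>.\<close>

lemma isotropic_lift_meets_V:
  fixes s :: "'c::euclidean_space \<Rightarrow> 'a"
  assumes S: "subspace S" "dim S = dim P" "dim P \<ge> 2"
    and cont: "continuous_on (sphere 0 1 \<inter> S) s"
    and iso: "\<And>t. t \<in> sphere 0 1 \<inter> S \<Longrightarrow> b (s t) (s t) = 0"
    and unit: "\<And>t. t \<in> sphere 0 1 \<inter> S \<Longrightarrow> b (projP (s t)) (projP (s t)) = 1"
    and neg: "\<And>t t'. t \<in> sphere 0 1 \<inter> S \<Longrightarrow> t' \<in> sphere 0 1 \<inter> S \<Longrightarrow> t \<noteq> t' \<Longrightarrow>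
                b (s t) (s t') < 0"
  obtains t where "t \<in> sphere 0 1 \<inter> S" "s t \<in> V"
proof (rule b_unit_maps_coincide[OF S, of "projP \<circ> s" "partner \<circ> s"])
  have "continuous_on A partner" for A
    using linear_continuous_on linear_conv_bounded_linear linear_partner by blast
  then show "continuous_on (sphere 0 1 \<inter> S) (projP \<circ> s)" "continuous_on (sphere 0 1 \<inter> S) (partner \<circ> s)"
    using continuous_on_compose[OF cont] continuous_on_projP by blast+
  show "(projP \<circ> s) t \<in> P" "(partner \<circ> s) t \<in> P" for t
    by (simp_all add: projP_in partner_in)
  show "b ((projP \<circ> s) t) ((projP \<circ> s) t) = 1 \<and> b ((partner \<circ> s) t) ((partner \<circ> s) t) = 1"
    if "t \<in> sphere 0 1 \<inter> S" for t
    using unit[OF that] iso[OF that] b_split[of "s t" "s t"] b_partner[of "s t" "s t"] by simp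
  show "b ((projP \<circ> s) t) ((projP \<circ> s) t') < b ((partner \<circ> s) t) ((partner \<circ> s) t')"
    if "t \<in> sphere 0 1 \<inter> S" "t' \<in> sphere 0 1 \<inter> S" "t \<noteq> t'" for t t'
    using neg[OF that] b_split[of "s t" "s t'"] b_partner[of "s t" "s t'"] by simp
qed (use that in_V_if_projP_eq_partner in auto)

end

section \<open>Lifting a positive sphere to negatively pairing isotropic vectors\<close>

locale positive_parametrization = orthogonal_splitting b P N
  for b :: "'a::euclidean_space \<Rightarrow> 'a \<Rightarrow> real" and P N +
  fixes \<phi> :: "'c::t1_space \<Rightarrow> 'a set" and D :: "'c set" and t0 t1 t2 :: 'c
  assumes continuous_\<phi>: "continuous_map (top_of_set D) proj_topology \<phi>"
    and isotropic_\<phi>: "\<And>t. t \<in> D \<Longrightarrow> \<phi> t \<in> isotropic_lines b"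
    and positive_\<phi>: "\<And>t t' t''. t \<in> D \<Longrightarrow> t' \<in> D \<Longrightarrow> t'' \<in> D \<Longrightarrow>
         t \<noteq> t' \<Longrightarrow> t' \<noteq> t'' \<Longrightarrow> t \<noteq> t'' \<Longrightarrow> positive_triple b (\<phi> t) (\<phi> t') (\<phi> t'')"
    and three_points: "t0 \<in> D" "t1 \<in> D" "t2 \<in> D" "t0 \<noteq> t1" "t1 \<noteq> t2" "t0 \<noteq> t2"
begin

lemma isotropic_rep: "t \<in> D \<Longrightarrow> x \<noteq> 0 \<Longrightarrow> line_of x = \<phi> t \<Longrightarrow> b x x = 0"
proof -
  assume t: "t \<in> D" and x: "x \<noteq> 0" "line_of x = \<phi> t"
  obtain v where "b v v = 0" "\<phi> t = line_of v" using isotropic_\<phi>[OF t] by (auto simp: isotropic_lines_def)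
  with x show "b x x = 0" by (auto simp: b_simps elim: line_of_eqE)
qed

lemma pairing_nonzero:
  assumes t: "t \<in> D" "t' \<in> D" "t \<noteq> t'"
    and x: "x \<noteq> 0" "line_of x = \<phi> t" and x': "x' \<noteq> 0" "line_of x' = \<phi> t'"
  shows "b x x' \<noteq> 0"
proof -
  obtain t'' where t'': "t'' \<in> D" "t'' \<noteq> t" "t'' \<noteq> t'" using three_points t by metis
  obtain w where w: "\<phi> t'' = line_of w" using isotropic_\<phi>[OF t''(1)] by (auto simp: isotropic_lines_def)
  have "positive_triple b (line_of w) (line_of x) (line_of x')"
    using positive_\<phi>[OF t''(1) t(1,2)] t t'' w x x' by auto
  from positive_triple_span[OF this] show ?thesis
    using signature_2_1_isotropic_pairing_nonzero isotropic_rep t x x' by metis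
qed

lemma pairing_neg:
  assumes t: "r \<in> D" "t \<in> D" "t' \<in> D" "r \<noteq> t" "t \<noteq> t'" "r \<noteq> t'"
    and w: "w \<noteq> 0" "line_of w = \<phi> r"
    and x: "x \<noteq> 0" "line_of x = \<phi> t" and x': "x' \<noteq> 0" "line_of x' = \<phi> t'"
    and neg: "b w x < 0" "b w x' < 0"
  shows "b x x' < 0"
proof -
  have "positive_triple b (line_of w) (line_of x) (line_of x')"
    using positive_\<phi>[OF t(1,2,3)] t w x x' by auto
  from positive_triple_span[OF this] show ?thesis
    using signature_2_1_isotropic_pairing_neg isotropic_rep t w x x' neg by metis
qed

lemma mem_chart_dom:
  assumes t: "r \<in> D" "t \<in> D" "t \<noteq> r" and w: "w \<noteq> 0" "line_of w = \<phi> r"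
  shows "\<phi> t \<in> line_of ` chart_dom w"
proof -
  obtain v where v: "v \<noteq> 0" "b v v = 0" "\<phi> t = line_of v"
    using isotropic_\<phi>[OF t(2)] by (auto simp: isotropic_lines_def)
  have "b w v \<noteq> 0" using pairing_nonzero[OF t(1,2) _ w] v t by auto
  moreover have "0 < b (projP v) (projP v)" using isotropic_projP_pos v by blast
  ultimately show ?thesis using v by (auto simp: chart_dom_def)
qed

lemma lift:
  assumes t: "r \<in> D" "t \<in> D" "t \<noteq> r" and w: "w \<noteq> 0" "line_of w = \<phi> r"
  shows "lift w (\<phi> t) \<noteq> 0" "line_of (lift w (\<phi> t)) = \<phi> t"
    and "b (projP (lift w (\<phi> t))) (projP (lift w (\<phi> t))) = 1" "b w (lift w (\<phi> t)) < 0"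
  using mem_chart_dom[OF assms] lift_line_of unit_normalize by auto

text \<open>Away from \<open>t0\<close> we normalise against a representative of \<open>\<phi> t0\<close>, near \<open>t0\<close> against
  the lift of \<open>\<phi> t1\<close>; by \<open>pairing_neg\<close> both normalisations agree where both are defined.\<close>

definition base_rep :: 'a where "base_rep = (SOME v. v \<noteq> 0 \<and> line_of v = \<phi> t0)"

definition second_rep :: 'a where "second_rep = lift base_rep (\<phi> t1)"

definition coherent_lift :: "'c \<Rightarrow> 'a" where
  "coherent_lift t = (if t = t0 then lift second_rep (\<phi> t) else lift base_rep (\<phi> t))"

lemma base_rep: "base_rep \<noteq> 0" "line_of base_rep = \<phi> t0"
proof -
  have "\<exists>v. v \<noteq> 0 \<and> line_of v = \<phi> t0"
    using isotropic_\<phi>[OF three_points(1)] by (auto simp: isotropic_lines_def)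
  then show "base_rep \<noteq> 0" "line_of base_rep = \<phi> t0"
    unfolding base_rep_def by (metis (mono_tags, lifting) someI_ex)+
qed

lemma second_rep: "second_rep \<noteq> 0" "line_of second_rep = \<phi> t1" "b base_rep second_rep < 0"
  using lift[OF three_points(1,2) three_points(4)[symmetric] base_rep] by (auto simp: second_rep_def)

lemma lifts_agree:
  assumes t: "t \<in> D" "t \<noteq> t0" "t \<noteq> t1"
  shows "lift base_rep (\<phi> t) = lift second_rep (\<phi> t)"
proof -
  note x = lift[OF three_points(1) t(1,2) base_rep]
  note y = lift[OF three_points(2) t(1,3) second_rep(1,2)]
  obtain c where c: "lift second_rep (\<phi> t) = c *\<^sub>R lift base_rep (\<phi> t)"
    using x y by (metis line_of_eqE)
  have "b second_rep (lift base_rep (\<phi> t)) < 0"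
    using pairing_neg[OF three_points(1,2) t(1) three_points(4) _ _ base_rep second_rep(1,2) x(1,2)]
      second_rep(3) x(4) t by auto
  then show ?thesis using unit_normalized_unique[OF c x(3) y(3) _ y(4)] by simp
qed

lemma coherent_lift:
  assumes t: "t \<in> D"
  shows "coherent_lift t \<noteq> 0" "line_of (coherent_lift t) = \<phi> t"
    and "b (projP (coherent_lift t)) (projP (coherent_lift t)) = 1"
  using lift[OF three_points(2) t _ second_rep(1,2)] lift[OF three_points(1) t _ base_rep] three_points
  by (auto simp: coherent_lift_def)

lemma coherent_lift_neg_base: "t \<in> D \<Longrightarrow> t \<noteq> t0 \<Longrightarrow> b base_rep (coherent_lift t) < 0"
  using lift(4)[OF three_points(1) _ _ base_rep] by (simp add: coherent_lift_def)

lemma coherent_lift_neg_second: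
  assumes t: "t \<in> D" "t \<noteq> t1"
  shows "b second_rep (coherent_lift t) < 0"
proof -
  have "coherent_lift t = lift second_rep (\<phi> t)" using lifts_agree t by (simp add: coherent_lift_def)
  then show ?thesis using lift(4)[OF three_points(2) t second_rep(1,2)] by simp
qed

lemma coherent_lift_pairing_neg:
  assumes t: "t \<in> D" "t' \<in> D" "t \<noteq> t'"
  shows "b (coherent_lift t) (coherent_lift t') < 0"
proof -
  note l = coherent_lift(1,2)[OF t(1)] coherent_lift(1,2)[OF t(2)]
  consider "t \<noteq> t0" "t' \<noteq> t0" | "t \<noteq> t1" "t' \<noteq> t1" | "t = t0" "t' = t1" | "t = t1" "t' = t0"
    using t(3) three_points(4) by metis
  then show ?thesis
  proof cases
    case 1
    then show ?thesis
      using pairing_neg[OF three_points(1) t(1,2) _ t(3) _ base_rep l] t coherent_lift_neg_base by auto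
  next
    case 2
    then show ?thesis
      using pairing_neg[OF three_points(2) t(1,2) _ t(3) _ second_rep(1,2) l] t
        coherent_lift_neg_second by auto
  next
    case 3
    then show ?thesis
      using coherent_lift_neg_second[OF three_points(1,4)] three_points
      by (simp add: coherent_lift_def second_rep_def sym)
  next
    case 4
    then show ?thesis
      using coherent_lift_neg_second[OF three_points(1,4)] three_points
      by (simp add: coherent_lift_def second_rep_def)
  qed
qed

lemma continuous_on_coherent_lift: "continuous_on D coherent_lift"
proof -
  have sub0: "D - {t0} \<subseteq> {t\<in>D. \<phi> t \<in> line_of ` chart_dom base_rep}"
    using mem_chart_dom[OF three_points(1) _ _ base_rep] by auto
  have sub1: "D - {t1} \<subseteq> {t\<in>D. \<phi> t \<in> line_of ` chart_dom second_rep}"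
    using mem_chart_dom[OF three_points(2) _ _ second_rep(1,2)] by auto
  have "continuous_on (D - {t0}) coherent_lift"
    by (rule continuous_on_eq[OF continuous_on_subset[OF continuous_on_lift[OF continuous_\<phi>] sub0]])
       (auto simp: coherent_lift_def)
  moreover have "continuous_on (D - {t1}) coherent_lift"
    by (rule continuous_on_eq[OF continuous_on_subset[OF continuous_on_lift[OF continuous_\<phi>] sub1]])
       (auto simp: coherent_lift_def lifts_agree)
  moreover have "(D - {t0}) \<union> (D - {t1}) = D" using three_points by auto
  ultimately show ?thesis
    using continuous_on_Un_local_open[of "D - {t0}" "D - {t1}" coherent_lift]
    by (simp add: openin_delete)
qed

lemma negative_lift_exists:
  obtains s where "continuous_on D s"
    and "\<And>t. t \<in> D \<Longrightarrow> s t \<noteq> 0 \<and> line_of (s t) = \<phi> t \<and> b (s t) (s t) = 0"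
    and "\<And>t. t \<in> D \<Longrightarrow> b (projP (s t)) (projP (s t)) = 1"
    and "\<And>t t'. t \<in> D \<Longrightarrow> t' \<in> D \<Longrightarrow> t \<noteq> t' \<Longrightarrow> b (s t) (s t') < 0"
proof (rule that[OF continuous_on_coherent_lift])
  fix t assume t: "t \<in> D"
  show "coherent_lift t \<noteq> 0 \<and> line_of (coherent_lift t) = \<phi> t \<and>
      b (coherent_lift t) (coherent_lift t) = 0"
    using coherent_lift(1,2)[OF t] isotropic_rep[OF t] by blast
  show "b (projP (coherent_lift t)) (projP (coherent_lift t)) = 1" by (rule coherent_lift(3)[OF t])
qed (rule coherent_lift_pairing_neg)

end

lemma (in orthogonal_splitting) positive_sphere_parametrization:
  assumes \<Lambda>: "positive_sphere b p \<Lambda>" and p: "2 \<le> p" "p \<le> DIM('a)"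
  obtains S :: "'a set" and \<phi> t0 t1 t2 where "subspace S" "dim S = p"
    and "\<And>t. t \<in> sphere 0 1 \<inter> S \<Longrightarrow> \<phi> t \<in> \<Lambda>"
    and "positive_parametrization b P N \<phi> (sphere 0 1 \<inter> S) t0 t1 t2"
proof -
  have "subtopology proj_topology \<Lambda> homeomorphic_space nsphere (p - 1)" "0 < p"
    using \<Lambda> p by (auto simp: positive_sphere_def)
  then obtain S :: "'a set" and \<phi> where S: "subspace S" "dim S = p"
    and \<phi>: "continuous_map (top_of_set (sphere 0 1 \<inter> S)) (subtopology proj_topology \<Lambda>) \<phi>"
      "inj_on \<phi> (sphere 0 1 \<inter> S)"
    using p(2) by (rule homeomorphic_nsphere_parametrization)
  have \<phi>\<Lambda>: "\<phi> t \<in> \<Lambda>" if "t \<in> sphere 0 1 \<inter> S" for t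
    using \<phi>(1) that by (auto simp: continuous_map_in_subtopology)
  obtain t0 t1 t2 where three: "t0 \<in> sphere 0 1 \<inter> S" "t1 \<in> sphere 0 1 \<inter> S" "t2 \<in> sphere 0 1 \<inter> S"
    "t0 \<noteq> t1" "t1 \<noteq> t2" "t0 \<noteq> t2"
    using sphere_Int_subspace_three_points[OF S(1)] S(2) p(1) by metis
  have "positive_parametrization b P N \<phi> (sphere 0 1 \<inter> S) t0 t1 t2"
  proof (intro positive_parametrization.intro positive_parametrization_axioms.intro
      orthogonal_splitting_axioms)
    fix t t' t'' assume t: "t \<in> sphere 0 1 \<inter> S" "t' \<in> sphere 0 1 \<inter> S" "t'' \<in> sphere 0 1 \<inter> S"
      and "t \<noteq> t'" "t' \<noteq> t''" "t \<noteq> t''"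
    then have "\<phi> t \<noteq> \<phi> t'" "\<phi> t' \<noteq> \<phi> t''" "\<phi> t \<noteq> \<phi> t''" using inj_onD[OF \<phi>(2)] by metis+
    then show "positive_triple b (\<phi> t) (\<phi> t') (\<phi> t'')"
      using \<Lambda> \<phi>\<Lambda>[OF t(1)] \<phi>\<Lambda>[OF t(2)] \<phi>\<Lambda>[OF t(3)] by (simp add: positive_sphere_def)
  qed (use \<phi> \<phi>\<Lambda> three \<Lambda> in \<open>auto simp: positive_sphere_def continuous_map_in_subtopology\<close>)
  with S \<phi>\<Lambda> that show ?thesis by blast
qed

lemma (in isotropic_graph) positive_sphere_meets_V:
  assumes \<Lambda>: "positive_sphere b p \<Lambda>" and p: "dim P = p" "2 \<le> p" "p \<le> DIM('a)"
  shows "proj_of V \<inter> \<Lambda> \<noteq> {}"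
proof -
  obtain S :: "'a set" and \<phi> t0 t1 t2 where S: "subspace S" "dim S = p"
    and \<phi>\<Lambda>: "\<And>t. t \<in> sphere 0 1 \<inter> S \<Longrightarrow> \<phi> t \<in> \<Lambda>"
    and param: "positive_parametrization b P N \<phi> (sphere 0 1 \<inter> S) t0 t1 t2"
    by (rule positive_sphere_parametrization[OF \<Lambda> p(2,3)]) blast
  interpret positive_parametrization b P N \<phi> "sphere 0 1 \<inter> S" t0 t1 t2 by (fact param)
  obtain s where s: "continuous_on (sphere 0 1 \<inter> S) s"
    "\<And>t. t \<in> sphere 0 1 \<inter> S \<Longrightarrow> s t \<noteq> 0 \<and> line_of (s t) = \<phi> t \<and> b (s t) (s t) = 0"
    "\<And>t. t \<in> sphere 0 1 \<inter> S \<Longrightarrow> b (projP (s t)) (projP (s t)) = 1"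
    "\<And>t t'. t \<in> sphere 0 1 \<inter> S \<Longrightarrow> t' \<in> sphere 0 1 \<inter> S \<Longrightarrow> t \<noteq> t' \<Longrightarrow> b (s t) (s t') < 0"
    using negative_lift_exists by blast
  have "dim S = dim P" "dim P \<ge> 2" using S(2) p by simp_all
  then obtain t where "t \<in> sphere 0 1 \<inter> S" "s t \<in> V"
    using isotropic_lift_meets_V[OF S(1) _ _ s(1)] s(2-4) by blast
  then show ?thesis using s(2) \<phi>\<Lambda> unfolding proj_of_def by blast
qed

theorem mainTheorem19:
  fixes b :: "real^'n \<Rightarrow> real^'n \<Rightarrow> real"
    and p q :: nat
    and \<Lambda> :: "(real^'n) set set"
    and V :: "(real^'n) set"
  assumes "p \<ge> 2" and "q \<ge> 1"
    and "CARD('n) = p + q + 1"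
    and "bilinear b" and "\<forall>x y. b x y = b y x"
    and "has_signature b UNIV p (q + 1)"
    and "positive_sphere b p \<Lambda>"
    and "maximal_totally_isotropic b p q V"
    and "p \<ge> q + 1"
  shows "proj_of V \<inter> \<Lambda> \<noteq> {}"
proof -
  interpret sym_bilinear b using assms(4,5) by unfold_locales auto
  obtain P N where PN: "subspace P" "subspace N" "dim P = p" "dim N = q + 1"
    "\<forall>x\<in>P. x \<noteq> 0 \<longrightarrow> b x x > 0" "\<forall>y\<in>N. y \<noteq> 0 \<longrightarrow> b y y < 0"
    "\<forall>x\<in>P. \<forall>y\<in>N. b x y = 0" "\<forall>u. \<exists>x\<in>P. \<exists>y\<in>N. u = x + y"
    by (rule orthogonal_splitting_exists[OF assms(6)])
  interpret isotropic_graph b P N V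
    using PN assms(8,9) by unfold_locales (auto simp: maximal_totally_isotropic_def)
  show ?thesis
    by (rule positive_sphere_meets_V) (use assms(1,3,7) PN(3) in auto)
qed

end
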